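(* Let $T$ be a string, let $1\le j\le |T|$, $1\le i\le j+1$, let $w$ be a string, and let $L=T[1..i-1]$, $R=T[j+1..|T|]$ and $T'=LwR$. Assume $|L|\ge |R|$, $|w|\le |L|/2$, and that the longest border of $Lw$ is longer than $|w|$. Partition the set of borders of $Lw$ into groups $G_1,\dots,G_m$ so that two borders lie in the same group iff they have the same smallest period, and let $p_k$ be the common smallest period of the borders in $G_k$. Assume that $T'$ has a border longer than $R$, and let $b^\star$ be the border of $Lw$ such that $b^\star R$ is the longest border of $T'$; let $k^\star$ be the index of the group containing $b^\star$. Let $\alpha_{k^\star}$ be the exponent of the longest prefix of $T'$ having period $p_{k^\star}$, and let $r_{k^\star}=\mathit{lce}_{T'}(|T'|-|R|-p_{k^\star}+1,\ |T'|-|R|+1)$. If $b^\star$ is periodic and $p_{k^\star}\ne\mathsf{per}(b^\star R)$, then $|b^\star|=\alpha_{k^\star}p_{k^\star}-r_{k^\star}$.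
   Context: $S[i..j]$ denotes the factor of $S$ from position $i$ to $j$ (empty if $i>j$). A border of a nonempty string $S$ is a string that is both a proper prefix and a proper suffix of $S$. If $S$ has a border $b$ then $|S|-|b|$ is a period of $S$; $\mathsf{per}(S)$ is the smallest period of $S$. The exponent of $S$ is $|S|/\mathsf{per}(S)$; $S$ is periodic if $\mathsf{per}(S)\le|S|/2$. For a string $S$ and positions $a,b$, $\mathit{lce}_S(a,b)$ is the length of the longest common prefix of $S[a..|S|]$ and $S[b..|S|]$. *)

theory Defs
  imports Complex_Main "HOL-Library.Sublist"
begin

(* Strings are lists; positions are 1-based in the paper. *)

definition is_border :: "'a list \<Rightarrow> 'a list \<Rightarrow> bool" where
  "is_border b S \<longleftrightarrow> S \<noteq> [] \<and> strict_prefix b S \<and> strict_suffix b S"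

definition is_longest_border :: "'a list \<Rightarrow> 'a list \<Rightarrow> bool" where
  "is_longest_border b S \<longleftrightarrow> is_border b S \<and> (\<forall>c. is_border c S \<longrightarrow> length c \<le> length b)"

definition has_period :: "'a list \<Rightarrow> nat \<Rightarrow> bool" where
  "has_period S p \<longleftrightarrow> 0 < p \<and> p \<le> length S \<and> (\<forall>k. k + p < length S \<longrightarrow> S ! k = S ! (k + p))"

definition per :: "'a list \<Rightarrow> nat" where
  "per S = (LEAST p. has_period S p)"

definition exponent :: "'a list \<Rightarrow> real" where
  "exponent S = real (length S) / real (per S)"

definition periodic :: "'a list \<Rightarrow> bool" where
  "periodic S \<longleftrightarrow> S \<noteq> [] \<and> 2 * per S \<le> length S"

definition longest_prefix_with_period :: "'a list \<Rightarrow> nat \<Rightarrow> 'a list" where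
  "longest_prefix_with_period S p =
     take (GREATEST n. n \<le> length S \<and> has_period (take n S) p) S"

definition lce :: "'a list \<Rightarrow> nat \<Rightarrow> nat \<Rightarrow> nat" where
  "lce S a b = (GREATEST n. n \<le> length S \<and>
       take n (drop (a - 1) S) = take n (drop (b - 1) S) \<and>
       n \<le> length (drop (a - 1) S) \<and> n \<le> length (drop (b - 1) S))"

end

theory Submission
  imports Defs
begin

text \<open>
  Let \<open>p = per b\<^sup>\<star>\<close>. The string \<open>b\<^sup>\<star>R\<close> occurs in \<open>T'\<close> twice: as a prefix and as a
  suffix. Since \<open>b\<^sup>\<star>\<close> has period \<open>p\<close> but \<open>b\<^sup>\<star>R\<close> does not (otherwise its smallest
  period would be \<open>p\<close> too), the period \<open>p\<close> of the prefix occurrence first breaks at a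
  position \<open>|b\<^sup>\<star>| + d\<close> with \<open>d < |R|\<close>. Hence the longest prefix of \<open>T'\<close> with period \<open>p\<close>
  has length \<open>|b\<^sup>\<star>| + d\<close> and smallest period \<open>p\<close>, so its exponent times \<open>p\<close> is
  \<open>|b\<^sup>\<star>| + d\<close>. In the suffix occurrence, comparing \<open>R\<close> with the text \<open>p\<close> positions
  earlier repeats exactly the same character comparisons, so it first fails after \<open>d\<close>
  characters: \<open>d\<close> is the \<open>lce\<close> value.
\<close>

lemma has_period_per: "S \<noteq> [] \<Longrightarrow> has_period S (per S)"
  unfolding per_def by (rule LeastI[of _ "length S"]) (auto simp: has_period_def)

lemma per_le: "has_period S q \<Longrightarrow> per S \<le> q"
  unfolding per_def by (rule Least_le)

lemma has_period_take:
  assumes "has_period S q" "q \<le> m" "m \<le> length S"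
  shows "has_period (take m S) q"
  using assms unfolding has_period_def by auto

lemma exponent_mult_per:
  assumes "S \<noteq> []"
  shows "exponent S * real (per S) = real (length S)"
  using has_period_per[OF assms] by (simp add: exponent_def has_period_def)

lemma per_eq_per_prefix:
  assumes "prefix u S" "u \<noteq> []" "has_period S (per u)"
  shows "per S = per u"
proof (rule antisym)
  show le: "per S \<le> per u"
    using assms(3) by (rule per_le)
  have "per u \<le> length u"
    using has_period_per[OF assms(2)] by (simp add: has_period_def)
  moreover have "S \<noteq> []"
    using assms(1,2) by auto
  ultimately have "has_period (take (length u) S) (per S)"
    using le assms(1) has_period_per prefix_length_le has_period_take by (metis order_trans)
  then have "has_period u (per S)"
    using assms(1) by (metis append_eq_conv_conj prefix_def)
  then show "per u \<le> per S"
    by (rule per_le)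
qed

lemma first_period_break:
  assumes "has_period (take b U) p" "\<not> has_period U p"
  obtains x where "b \<le> x" "x < length U" "U ! (x - p) \<noteq> U ! x"
    "has_period (take x U) p"
proof -
  have p: "0 < p" "p \<le> b" "p \<le> length U"
    using assms(1) by (auto simp: has_period_def)
  let ?break = "\<lambda>y. p \<le> y \<and> y < length U \<and> U ! (y - p) \<noteq> U ! y"
  obtain k where "k + p < length U" "U ! k \<noteq> U ! (k + p)"
    using assms(2) p by (auto simp: has_period_def)
  then have "?break (k + p)"
    by simp
  then obtain x where x: "?break x" and min: "\<And>y. ?break y \<Longrightarrow> x \<le> y"
    using exists_least_iff[of ?break] by (metis not_le)
  have "b \<le> x"
  proof (rule ccontr)
    assume "\<not> b \<le> x"
    then have "take b U ! (x - p) = take b U ! (x - p + p)"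
      using assms(1) x by (simp add: has_period_def)
    then show False
      using x \<open>\<not> b \<le> x\<close> by simp
  qed
  moreover have "has_period (take x U) p"
    unfolding has_period_def
  proof (intro conjI allI impI)
    fix k assume "k + p < length (take x U)"
    then have "\<not> ?break (k + p)"
      using min[of "k + p"] by auto
    then show "take x U ! k = take x U ! (k + p)"
      using \<open>k + p < length (take x U)\<close> by auto
  qed (use p x \<open>b \<le> x\<close> in auto)
  ultimately show thesis
    using that x by blast
qed

lemma longest_prefix_with_period_eq:
  assumes "has_period (take x S) p" "x < length S" "S ! (x - p) \<noteq> S ! x"
  shows "longest_prefix_with_period S p = take x S"
proof -
  have "(GREATEST n. n \<le> length S \<and> has_period (take n S) p) = x"
  proof (rule Greatest_equality)
    fix y assume y: "y \<le> length S \<and> has_period (take y S) p"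
    show "y \<le> x"
    proof (rule ccontr)
      assume "\<not> y \<le> x"
      moreover have "p \<le> x"
        using assms(1,2) by (simp add: has_period_def)
      ultimately have "take y S ! (x - p) = take y S ! (x - p + p)"
        using y by (simp add: has_period_def)
      then show False
        using assms(3) \<open>\<not> y \<le> x\<close> \<open>p \<le> x\<close> by simp
    qed
  qed (use assms in simp)
  then show ?thesis
    by (simp add: longest_prefix_with_period_def)
qed

lemma lce_eq:
  assumes "a + d < length S" "c + d < length S"
    and "\<And>k. k < d \<Longrightarrow> S ! (a + k) = S ! (c + k)" and "S ! (a + d) \<noteq> S ! (c + d)"
  shows "lce S (Suc a) (Suc c) = d"
  unfolding lce_def
proof (simp, rule Greatest_equality)
  show "d \<le> length S \<and> take d (drop a S) = take d (drop c S) \<and>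
      d \<le> length S - a \<and> d \<le> length S - c"
    using assms(1-3) by (auto intro: nth_equalityI)
next
  fix m assume m: "m \<le> length S \<and> take m (drop a S) = take m (drop c S) \<and>
      m \<le> length S - a \<and> m \<le> length S - c"
  show "m \<le> d"
  proof (rule ccontr)
    assume "\<not> m \<le> d"
    then have "take m (drop a S) ! d = take m (drop c S) ! d"
      using m by simp
    then show False
      using assms(1,2,4) \<open>\<not> m \<le> d\<close> by simp
  qed
qed

lemma lce_period_break:
  assumes "prefix U (drop m S)" and "has_period (take x U) p"
    and "p \<le> b" "b \<le> x" "x < length U" "U ! (x - p) \<noteq> U ! x"
  shows "lce S (Suc (m + b - p)) (Suc (m + b)) = x - b"
proof -
  have "m + length U \<le> length S"
    using prefix_length_le[OF assms(1)] assms(5) by simp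
  have U_at: "S ! (m + k) = U ! k" if "k < length U" for k
  proof -
    have "S ! (m + k) = drop m S ! k"
      using \<open>m + length U \<le> length S\<close> that by simp
    also have "\<dots> = U ! k"
      using assms(1) that by (auto simp: prefix_def nth_append)
    finally show ?thesis .
  qed
  have shift: "m + b - p + k = m + (b + k - p)" "m + b + k = m + (b + k)" for k
    using assms(3) by simp_all
  show ?thesis
  proof (rule lce_eq)
    fix k assume "k < x - b"
    have "U ! (b + k - p) = U ! (b + k)"
      using assms(2-5) \<open>k < x - b\<close> by (simp add: has_period_def)
    then show "S ! (m + b - p + k) = S ! (m + b + k)"
      unfolding shift using U_at[of "b + k - p"] U_at[of "b + k"] \<open>k < x - b\<close> assms(5) by simp
  next
    show "S ! (m + b - p + (x - b)) \<noteq> S ! (m + b + (x - b))"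
      unfolding shift using U_at[of "x - p"] U_at[of x] assms(3-6) by simp
  qed (use \<open>m + length U \<le> length S\<close> assms(3-5) in simp_all)
qed

lemma longest_prefix_with_period_border_extension:
  fixes X R u :: "'a list"
  assumes "prefix (u @ R) (X @ R)" and "suffix u X" and "u \<noteq> []"
    and "per u \<noteq> per (u @ R)"
  shows "length (longest_prefix_with_period (X @ R) (per u))
           = length u + lce (X @ R) (Suc (length X - per u)) (Suc (length X))"
    and "per (longest_prefix_with_period (X @ R) (per u)) = per u"
proof -
  define S U p b n where "S = X @ R" and "U = u @ R" and "p = per u"
    and "b = length u" and "n = length X"
  have "has_period u p"
    using has_period_per[OF assms(3)] by (simp add: p_def)
  then have periodic_b: "has_period (take b U) p" and "p \<le> b"
    by (simp_all add: U_def b_def has_period_def)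
  have "\<not> has_period U p"
    using per_eq_per_prefix[of u U] assms(3,4) by (auto simp: U_def p_def)
  then obtain x where x: "b \<le> x" "x < length U" "U ! (x - p) \<noteq> U ! x"
    and periodic_x: "has_period (take x U) p"
    using first_period_break[OF periodic_b] by blast
  have U_prefix: "take (length U) S = U"
    using assms(1) unfolding S_def U_def by (metis append_eq_conv_conj prefix_def)
  then have S_U: "\<And>y. y < length U \<Longrightarrow> S ! y = U ! y"
    by (metis nth_take)
  have take_x: "take x S = take x U"
    using U_prefix x(2) by (metis min.strict_order_iff take_take)
  have lp: "longest_prefix_with_period S p = take x U"
  proof -
    have "length U \<le> length S"
      using prefix_length_le[OF assms(1)] by (simp add: S_def U_def)
    then show ?thesis
      using longest_prefix_with_period_eq[of x S p] periodic_x x take_x S_U \<open>p \<le> b\<close>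
      by simp
  qed
  show "per (longest_prefix_with_period (X @ R) (per u)) = per u"
  proof -
    have "prefix u (take x U)"
      using x(1) by (simp add: U_def b_def prefix_def take_append)
    then show ?thesis
      using per_eq_per_prefix assms(3) periodic_x lp by (simp add: S_def p_def)
  qed
  have "b \<le> n"
    using suffix_length_le[OF assms(2)] by (simp add: b_def n_def)
  have "prefix U (drop (n - b) S)"
    using assms(2) by (auto simp: suffix_def S_def U_def n_def b_def)
  from lce_period_break[OF this periodic_x \<open>p \<le> b\<close> x]
  have "lce S (Suc (n - p)) (Suc n) = x - b"
    using \<open>p \<le> b\<close> \<open>b \<le> n\<close> by simp
  then show "length (longest_prefix_with_period (X @ R) (per u))
           = length u + lce (X @ R) (Suc (length X - per u)) (Suc (length X))"
    using lp x by (simp add: S_def p_def n_def b_def)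
qed

theorem lemma10:
  fixes T w :: "'a list" and i j :: nat and bstar :: "'a list"
  defines "L \<equiv> take (i - 1) T"
      and "R \<equiv> drop j T"
      and "T' \<equiv> take (i - 1) T @ w @ drop j T"
  assumes "1 \<le> j" and "j \<le> length T" and "1 \<le> i" and "i \<le> j + 1"
      and "length L \<ge> length R"
      and "2 * length w \<le> length L"
      and "\<exists>b. is_longest_border b (L @ w) \<and> length b > length w"
      and "\<exists>c. is_border c T' \<and> length c > length R"
      and "is_border bstar (L @ w)"
      and "is_longest_border (bstar @ R) T'"
      and "periodic bstar"
      and "per bstar \<noteq> per (bstar @ R)"
  shows "real (length bstar) =
           exponent (longest_prefix_with_period T' (per bstar)) * real (per bstar)
           - real (lce T' (length T' - length R - per bstar + 1) (length T' - length R + 1))"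
proof -
  have T': "T' = (L @ w) @ R"
    unfolding T'_def L_def R_def by simp
  have "prefix (bstar @ R) ((L @ w) @ R)"
    using assms(13) T' by (auto simp: is_longest_border_def is_border_def strict_prefix_def)
  moreover have "suffix bstar (L @ w)"
    using assms(12) by (auto simp: is_border_def strict_suffix_def)
  moreover have "bstar \<noteq> []"
    using assms(14) by (simp add: periodic_def)
  ultimately have len: "length (longest_prefix_with_period T' (per bstar))
      = length bstar + lce T' (length T' - length R - per bstar + 1) (length T' - length R + 1)"
    and per: "per (longest_prefix_with_period T' (per bstar)) = per bstar"
    using longest_prefix_with_period_border_extension[of bstar R "L @ w"] assms(15)
    by (simp_all add: T')
  have "longest_prefix_with_period T' (per bstar) \<noteq> []"
    using len \<open>bstar \<noteq> []\<close> by auto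
  from exponent_mult_per[OF this] show ?thesis
    unfolding per len by simp
qed

end
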